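(* Let $k>0$ and $g(u;a)=u(1-u)(u-a)$. Define $$a_*^+(k)=\frac{\sqrt{4k+k^2}-k}{2},\qquad a_1^+(k)=\min\Big\{\frac{2\sqrt k}{2+\sqrt k},1\Big\},$$ and for $a_*^+(k)\le a\le 1$, $$d^+_{\min}(a,k)=\frac{2a^2+a(k-4)+4-k-2(2-a)\sqrt{a^2+ka-k}}{(4+k)^2},$$ $$d^+_{\max}(a,k)=\begin{cases}\dfrac{a^2}{4k}, & a\in(a_1^+(k),1],\\[2mm]\dfrac{2a^2+a(k-4)+4-k+2(2-a)\sqrt{a^2+ka-k}}{(4+k)^2}, & a\in[a_*^+(k),a_1^+(k)].\end{cases}$$ Then: (i) $d^+_{\min},d^+_{\max}\in C([a_*^+(k),1]\times(0,\infty);\mathbb R)$ and $0\le d^+_{\min}(a,k)\le d^+_{\max}(a,k)\le d^+(a,k)$ for all $a\in[a_*^+(k),1]$, where $d^+(a,k)=\max_{y\in(1-a,1)}\frac{-g(1-y;a)}{ky}$; (ii) $d^+_{\max}(a_*^+(k),k)=d^+_{\min}(a_*^+(k),k)$; (iii) $$\mathcal D^+(k)=\{(a,d)\in\mathcal H:\ a>a_*^+(k),\ d^+_{\min}(a,k)<d<d^+_{\max}(a,k)\}.$$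
   Context: Let $\mathcal H=(0,1)\times(0,\infty)$. For a nonlinearity $f(u;a)$, $K>0$, $a,A\in(0,1)$ let $d^\diamond_{f,K}(A;a)=\inf\{d>0:\ d(K+1)(A-v)-f(A;a)\ge -f(v;a)\ \forall v\in[0,A]\}$ and $\mathcal D^-_f(K)=\{(a,d)\in\mathcal H:\ d^\diamond_{f,K}(A;a)<d<f(A;a)/A$ for some $A\in(a,1)\}$. With $\tilde g(v;b):=-g(1-v;1-b)$ (for the cubic, $\tilde g=g$), define $\mathcal D^+(k)=\{(a,d)\in\mathcal H:\ (1-a,dk)\in\mathcal D^-_{\tilde g}(1/k)\}$. *)

theory Defs
  imports "HOL-Analysis.Analysis"
begin

definition H_strip :: "(real \<times> real) set" where
  "H_strip = {0<..<1} \<times> {0<..}"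

definition gcub :: "real \<Rightarrow> real \<Rightarrow> real" where
  "gcub u a = u * (1 - u) * (u - a)"

definition d_diamond :: "(real \<Rightarrow> real \<Rightarrow> real) \<Rightarrow> real \<Rightarrow> real \<Rightarrow> real \<Rightarrow> real" where
  "d_diamond f K A a =
     Inf {d. d > 0 \<and> (\<forall>v\<in>{0..A}. d * (K + 1) * (A - v) - f A a \<ge> - f v a)}"

definition D_minus :: "(real \<Rightarrow> real \<Rightarrow> real) \<Rightarrow> real \<Rightarrow> (real \<times> real) set" where
  "D_minus f K = {(a, d). (a, d) \<in> H_strip \<and>
      (\<exists>A\<in>{a<..<1}. d_diamond f K A a < d \<and> d < f A a / A)}"

definition reflect_nl :: "(real \<Rightarrow> real \<Rightarrow> real) \<Rightarrow> real \<Rightarrow> real \<Rightarrow> real" where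
  "reflect_nl g v b = - g (1 - v) (1 - b)"

definition D_plus :: "real \<Rightarrow> (real \<times> real) set" where
  "D_plus k = {(a, d). (a, d) \<in> H_strip \<and> (1 - a, d * k) \<in> D_minus (reflect_nl gcub) (1 / k)}"

definition a_star_plus :: "real \<Rightarrow> real" where
  "a_star_plus k = (sqrt (4 * k + k\<^sup>2) - k) / 2"

definition a_one_plus :: "real \<Rightarrow> real" where
  "a_one_plus k = min (2 * sqrt k / (2 + sqrt k)) 1"

definition d_min_plus :: "real \<Rightarrow> real \<Rightarrow> real" where
  "d_min_plus a k =
     (2 * a\<^sup>2 + a * (k - 4) + 4 - k - 2 * (2 - a) * sqrt (a\<^sup>2 + k * a - k)) / (4 + k)\<^sup>2"

definition d_max_plus :: "real \<Rightarrow> real \<Rightarrow> real" where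
  "d_max_plus a k =
     (if a_one_plus k < a then a\<^sup>2 / (4 * k)
      else (2 * a\<^sup>2 + a * (k - 4) + 4 - k + 2 * (2 - a) * sqrt (a\<^sup>2 + k * a - k)) / (4 + k)\<^sup>2)"

text \<open>d^+(a,k) = max over y in (1-a,1) of -g(1-y;a)/(k y) (the maximum is attained,
  so it equals the supremum).\<close>
definition d_plus :: "real \<Rightarrow> real \<Rightarrow> real" where
  "d_plus a k = Sup ((\<lambda>y. - gcub (1 - y) a / (k * y)) ` {1 - a<..<1})"

end

(* Substituting A = 1 - w and d = x^2, a point (a, d) of the strip lies in D^+(k) iff some
   w in (0, a) has k x^2 < w (a - w) while the difference quotient of the cubic, a concave
   parabola in v, stays below (1 + k) x^2 on [0, 1 - w].  Put z = 2x - (1 - a).  Evaluating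
   the parabola at v = x (if x <= 1 - w) forces z > min(w, a - w); conversely, a w just to
   the right of the smaller root of w (a - w) = k x^2 is admissible as soon as that root lies
   below z.  Since t (a - t) is symmetric about a/2, both directions reduce the membership to
     4 k x^2 < a^2  and  (z > a/2  or  k x^2 < z (a - z)).
   The last inequality is a quadratic inequality in x whose roots are the square roots of
   d_min_plus and of the second formula of d_max_plus; a_one_plus k is the value of a at
   which z = a/2 becomes its larger root. *)

theory Submission
  imports Defs
begin

lemma sq_less_sq_iff: "0 \<le> r \<Longrightarrow> 0 \<le> s \<Longrightarrow> r\<^sup>2 < s\<^sup>2 \<longleftrightarrow> r < (s::real)"
  by (meson power_strict_mono power2_less_imp_less pos2)

lemma four_mult_diff_le_sq: "4 * (z * (a - z)) \<le> (a::real)\<^sup>2"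
  using zero_le_power2[of "a - 2 * z"] by (simp add: power2_eq_square algebra_simps)

lemma mult_diff_less_mult_diff:
  fixes w z a :: real
  assumes "min w (a - w) < z" "z \<le> a / 2"
  shows "w * (a - w) < z * (a - z)"
proof -
  have "z * (a - z) - w * (a - w) = (z - w) * (a - z - w)"
    by (simp add: algebra_simps)
  moreover have "0 < (z - w) * (a - z - w)"
    using assms by (cases "w \<le> a - w") (auto intro: mult_pos_pos mult_neg_neg)
  ultimately show ?thesis by simp
qed

lemma a_star_plus_pos: "0 < k \<Longrightarrow> 0 < a_star_plus k"
  and a_star_plus_less_one: "0 < k \<Longrightarrow> a_star_plus k < 1"
  and a_star_plus_root: "0 < k \<Longrightarrow> (a_star_plus k)\<^sup>2 + k * a_star_plus k - k = 0"
proof -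
  assume k: "0 < k"
  define S where "S = sqrt (4 * k + k\<^sup>2)"
  have S2: "S\<^sup>2 = 4 * k + k\<^sup>2" and S0: "0 \<le> S"
    unfolding S_def using k by (simp_all add: add_nonneg_nonneg)
  have "k\<^sup>2 < S\<^sup>2" "S\<^sup>2 < (k + 2)\<^sup>2"
    using S2 k by (simp_all add: power2_eq_square algebra_simps)
  then have "k < S" "S < k + 2"
    using S0 k by (auto intro: power_less_imp_less_base)
  then show "0 < a_star_plus k" "a_star_plus k < 1"
    unfolding a_star_plus_def S_def[symmetric] by auto
  show "(a_star_plus k)\<^sup>2 + k * a_star_plus k - k = 0"
    unfolding a_star_plus_def S_def[symmetric] using S2
    by (simp add: power2_eq_square field_simps)
qed

lemma discr_factor:
  assumes "0 < k"
  shows "a\<^sup>2 + k * a - k = (a - a_star_plus k) * (a + a_star_plus k + k)"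
  using a_star_plus_root[OF assms] by (simp add: algebra_simps power2_eq_square)

lemma discr_nonneg:
  assumes "0 < k" "a_star_plus k \<le> a"
  shows "0 \<le> a\<^sup>2 + k * a - k"
  using discr_factor[OF assms(1), of a] a_star_plus_pos[OF assms(1)] assms by simp

lemma discr_pos_iff:
  assumes "0 < k" "0 < a"
  shows "0 < a\<^sup>2 + k * a - k \<longleftrightarrow> a_star_plus k < a"
  using discr_factor[OF assms(1), of a] a_star_plus_pos[OF assms(1)] assms
  by (simp add: zero_less_mult_iff)

section \<open>The critical quadratic\<close>

definition crit_quad :: "real \<Rightarrow> real \<Rightarrow> real \<Rightarrow> real" where
  "crit_quad a k x = (k + 4) * x\<^sup>2 - 2 * (2 - a) * x + (1 - a)"

definition root_lo :: "real \<Rightarrow> real \<Rightarrow> real" where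
  "root_lo a k = (2 - a - sqrt (a\<^sup>2 + k * a - k)) / (k + 4)"

definition root_hi :: "real \<Rightarrow> real \<Rightarrow> real" where
  "root_hi a k = (2 - a + sqrt (a\<^sup>2 + k * a - k)) / (k + 4)"

lemma crit_quad_shifted: "crit_quad a k x = k * x\<^sup>2 - (2 * x - (1 - a)) * (a - (2 * x - (1 - a)))"
  unfolding crit_quad_def by (simp add: power2_eq_square algebra_simps)

lemma crit_quad_completed_square:
  "(k + 4) * crit_quad a k x = ((k + 4) * x - (2 - a))\<^sup>2 - (a\<^sup>2 + k * a - k)"
  unfolding crit_quad_def by (simp add: power2_eq_square algebra_simps)

lemma crit_quad_neg_iff:
  assumes "0 < k"
  shows "crit_quad a k x < 0 \<longleftrightarrow>
           0 < a\<^sup>2 + k * a - k \<and> root_lo a k < x \<and> x < root_hi a k"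
proof -
  have k4: "0 < k + 4" using assms by simp
  have "crit_quad a k x < 0 \<longleftrightarrow> ((k + 4) * x - (2 - a))\<^sup>2 < a\<^sup>2 + k * a - k"
    using crit_quad_completed_square[of k a x] k4 by (metis diff_less_0_iff_less mult_less_0_iff not_less_iff_gr_or_eq)
  also have "\<dots> \<longleftrightarrow> 0 < a\<^sup>2 + k * a - k \<and> \<bar>(k + 4) * x - (2 - a)\<bar> < sqrt (a\<^sup>2 + k * a - k)"
    by (smt (verit) real_less_rsqrt real_sqrt_abs real_sqrt_less_iff zero_le_power2)
  also have "\<dots> \<longleftrightarrow> 0 < a\<^sup>2 + k * a - k \<and> root_lo a k < x \<and> x < root_hi a k"
    unfolding root_lo_def root_hi_def using k4
    by (auto simp: abs_less_iff divide_less_eq less_divide_eq algebra_simps)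
  finally show ?thesis .
qed

lemma root_lo_nonneg:
  assumes "0 < k" "0 \<le> a\<^sup>2 + k * a - k" "a \<le> 1"
  shows "0 \<le> root_lo a k"
proof -
  have "(2 - a)\<^sup>2 - (a\<^sup>2 + k * a - k) = (k + 4) * (1 - a)"
    by (simp add: power2_eq_square algebra_simps)
  moreover have "0 \<le> (k + 4) * (1 - a)"
    using assms by simp
  ultimately have "a\<^sup>2 + k * a - k \<le> (2 - a)\<^sup>2"
    by linarith
  then have "sqrt (a\<^sup>2 + k * a - k) \<le> 2 - a"
    using assms(3) by (simp add: real_sqrt_le_iff real_le_lsqrt)
  then show ?thesis
    unfolding root_lo_def using assms(1) by simp
qed

lemma root_lo_le_root_hi:
  "0 < k \<Longrightarrow> 0 \<le> a\<^sup>2 + k * a - k \<Longrightarrow> root_lo a k \<le> root_hi a k"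
  unfolding root_lo_def root_hi_def by (simp add: divide_right_mono)

lemma crit_quad_root_hi:
  assumes "0 < k" "0 \<le> a\<^sup>2 + k * a - k"
  shows "crit_quad a k (root_hi a k) = 0"
proof -
  have "(k + 4) * root_hi a k - (2 - a) = sqrt (a\<^sup>2 + k * a - k)"
    unfolding root_hi_def using assms(1) by simp
  then have "(k + 4) * crit_quad a k (root_hi a k) = 0"
    using crit_quad_completed_square[of k a "root_hi a k"] assms(2) by simp
  then show ?thesis using assms(1) by simp
qed

lemma root_hi_eqI:
  assumes "0 < k" "crit_quad a k x = 0" "2 - a \<le> (k + 4) * x"
  shows "0 \<le> a\<^sup>2 + k * a - k" "root_hi a k = x"
proof -
  have discr: "a\<^sup>2 + k * a - k = ((k + 4) * x - (2 - a))\<^sup>2"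
    using crit_quad_completed_square[of k a x] assms(2) by simp
  then show "0 \<le> a\<^sup>2 + k * a - k" by simp
  show "root_hi a k = x"
    unfolding root_hi_def discr using assms(1,3) by (simp add: divide_simps)
qed

lemma root_hi_sq_le:
  assumes "0 < k" "0 \<le> a\<^sup>2 + k * a - k"
  shows "4 * k * (root_hi a k)\<^sup>2 \<le> a\<^sup>2"
proof -
  define z where "z = 2 * root_hi a k - (1 - a)"
  have "k * (root_hi a k)\<^sup>2 = z * (a - z)"
    using crit_quad_root_hi[OF assms] crit_quad_shifted[of a k "root_hi a k"]
    unfolding z_def by simp
  then show ?thesis
    using four_mult_diff_le_sq[of z a] by simp
qed

lemma root_lo_sq:
  assumes "0 \<le> a\<^sup>2 + k * a - k"
  shows "(root_lo a k)\<^sup>2 =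
    (2 * a\<^sup>2 + a * (k - 4) + 4 - k - 2 * (2 - a) * sqrt (a\<^sup>2 + k * a - k)) / (4 + k)\<^sup>2"
  unfolding root_lo_def using assms
  by (simp add: power_divide power2_eq_square algebra_simps)

lemma root_hi_sq:
  assumes "0 \<le> a\<^sup>2 + k * a - k"
  shows "(root_hi a k)\<^sup>2 =
    (2 * a\<^sup>2 + a * (k - 4) + 4 - k + 2 * (2 - a) * sqrt (a\<^sup>2 + k * a - k)) / (4 + k)\<^sup>2"
  unfolding root_hi_def using assms
  by (simp add: power_divide power2_eq_square algebra_simps)

lemma d_min_plus_eq: "0 \<le> a\<^sup>2 + k * a - k \<Longrightarrow> d_min_plus a k = (root_lo a k)\<^sup>2"
  unfolding d_min_plus_def by (simp add: root_lo_sq)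

lemma d_max_plus_eq_root_hi:
  "0 \<le> a\<^sup>2 + k * a - k \<Longrightarrow> \<not> a_one_plus k < a \<Longrightarrow> d_max_plus a k = (root_hi a k)\<^sup>2"
  unfolding d_max_plus_def by (simp add: root_hi_sq)

lemma d_max_plus_eq_branch: "a_one_plus k < a \<Longrightarrow> d_max_plus a k = a\<^sup>2 / (4 * k)"
  unfolding d_max_plus_def by simp

lemma crit_quad_quarter: "16 * crit_quad a k ((2 - a) / 4) = k * (2 - a)\<^sup>2 - 4 * a\<^sup>2"
  unfolding crit_quad_def by (simp add: power2_eq_square field_simps)

lemma a_one_plus_less_iff:
  assumes "0 < k" "0 < a" "a \<le> 1"
  shows "a_one_plus k < a \<longleftrightarrow> k * (2 - a)\<^sup>2 < 4 * a\<^sup>2"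
proof -
  have pos: "0 < 2 + sqrt k"
    using assms(1) real_sqrt_gt_zero[of k] by linarith
  have "a_one_plus k < a \<longleftrightarrow> 2 * sqrt k / (2 + sqrt k) < a"
    unfolding a_one_plus_def using assms(3) by auto
  also have "\<dots> \<longleftrightarrow> 2 * sqrt k < a * (2 + sqrt k)"
    by (rule pos_divide_less_eq[OF pos])
  also have "\<dots> \<longleftrightarrow> sqrt k * (2 - a) < 2 * a"
    by (simp add: algebra_simps)
  also have "\<dots> \<longleftrightarrow> (sqrt k * (2 - a))\<^sup>2 < (2 * a)\<^sup>2"
    using assms by (intro sq_less_sq_iff[symmetric]) simp_all
  also have "\<dots> \<longleftrightarrow> k * (2 - a)\<^sup>2 < 4 * a\<^sup>2"
    using assms(1) by (simp add: power_mult_distrib)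
  finally show ?thesis .
qed

lemma a_one_plus_less_iff_crit_quad:
  assumes "0 < k" "0 < a" "a \<le> 1"
  shows "a_one_plus k < a \<longleftrightarrow> crit_quad a k ((2 - a) / 4) < 0"
  using a_one_plus_less_iff[OF assms] crit_quad_quarter[of a k] by arith

lemma a_one_plus_less_imp_roots:
  assumes "0 < k" "0 < a" "a \<le> 1" "a_one_plus k < a"
  shows "0 < a\<^sup>2 + k * a - k" "root_lo a k < (2 - a) / 4" "(2 - a) / 4 < root_hi a k"
  using a_one_plus_less_iff_crit_quad[OF assms(1-3)] crit_quad_neg_iff[OF assms(1)] assms(4)
  by auto

lemma d_max_plus_formulas_agree:
  assumes "0 < k" "a = 2 * sqrt k / (2 + sqrt k)"
  shows "a\<^sup>2 / (4 * k) =
    (2 * a\<^sup>2 + a * (k - 4) + 4 - k + 2 * (2 - a) * sqrt (a\<^sup>2 + k * a - k)) / (4 + k)\<^sup>2"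
proof -
  have pos: "0 < 2 + sqrt k"
    using assms(1) real_sqrt_gt_zero[of k] by linarith
  then have "a * (2 + sqrt k) = 2 * sqrt k"
    unfolding assms(2) by simp
  then have "sqrt k * (2 - a) = 2 * a"
    by (simp add: algebra_simps)
  then have "(sqrt k * (2 - a))\<^sup>2 = (2 * a)\<^sup>2"
    by simp
  then have switch: "k * (2 - a)\<^sup>2 = 4 * a\<^sup>2"
    using assms(1) by (simp add: power_mult_distrib)
  have "a < 2" unfolding assms(2) using pos by (simp add: divide_less_eq)
  then have "2 - a \<le> (k + 4) * ((2 - a) / 4)"
    using assms(1) by (simp add: field_simps)
  moreover have "crit_quad a k ((2 - a) / 4) = 0"
    using crit_quad_quarter[of a k] switch by simp
  ultimately have discr: "0 \<le> a\<^sup>2 + k * a - k" and hi: "root_hi a k = (2 - a) / 4"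
    using root_hi_eqI[OF assms(1)] by auto
  have "(2 * a\<^sup>2 + a * (k - 4) + 4 - k + 2 * (2 - a) * sqrt (a\<^sup>2 + k * a - k)) / (4 + k)\<^sup>2
      = (root_hi a k)\<^sup>2"
    by (rule root_hi_sq[OF discr, symmetric])
  also have "\<dots> = a\<^sup>2 / (4 * k)"
    unfolding hi using switch assms(1) by (simp add: power_divide field_simps)
  finally show ?thesis ..
qed

lemma d_min_plus_less_iff:
  assumes "0 < k" "0 \<le> a\<^sup>2 + k * a - k" "a \<le> 1" "0 < x"
  shows "d_min_plus a k < x\<^sup>2 \<longleftrightarrow> root_lo a k < x"
  using sq_less_sq_iff[OF root_lo_nonneg[OF assms(1-3)], of x] d_min_plus_eq[OF assms(2)] assms(4)
  by simp

lemma less_d_max_plus_iff_root_hi: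
  assumes "0 < k" "0 \<le> a\<^sup>2 + k * a - k" "a \<le> 1" "\<not> a_one_plus k < a" "0 < x"
  shows "x\<^sup>2 < d_max_plus a k \<longleftrightarrow> x < root_hi a k"
proof -
  have "0 \<le> root_hi a k"
    using root_lo_nonneg[OF assms(1-3)] root_lo_le_root_hi[OF assms(1,2)] by simp
  then show ?thesis
    using sq_less_sq_iff[of x "root_hi a k"] d_max_plus_eq_root_hi[OF assms(2,4)] assms(5)
    by simp
qed

lemma less_d_max_plus_iff_branch:
  assumes "0 < k" "a_one_plus k < a"
  shows "x\<^sup>2 < d_max_plus a k \<longleftrightarrow> 4 * k * x\<^sup>2 < a\<^sup>2"
  using d_max_plus_eq_branch[OF assms(2)] assms(1)
  by (simp add: less_divide_eq mult.commute mult.left_commute)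

lemma crit_condition_imp_region:
  assumes k: "0 < k" and a: "0 < a" "a < 1" and x: "0 < x"
    and bound: "4 * k * x\<^sup>2 < a\<^sup>2" and crit: "2 - a < 4 * x \<or> crit_quad a k x < 0"
  shows "a_star_plus k < a \<and> d_min_plus a k < x\<^sup>2 \<and> x\<^sup>2 < d_max_plus a k"
proof (cases "crit_quad a k x < 0")
  case True
  then have discr: "0 < a\<^sup>2 + k * a - k" and "root_lo a k < x" "x < root_hi a k"
    using crit_quad_neg_iff[OF k] by auto
  then show ?thesis
    using discr_pos_iff[OF k a(1)] d_min_plus_less_iff[OF k _ _ x] less_d_max_plus_iff_root_hi[OF k _ _ _ x]
      less_d_max_plus_iff_branch[OF k] bound a
    by (cases "a_one_plus k < a") auto
next
  case False
  then have quarter_less: "2 - a < 4 * x"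
    using crit by simp
  have branch: "a_one_plus k < a"
  proof (rule ccontr)
    assume "\<not> a_one_plus k < a"
    then have "4 * a\<^sup>2 \<le> k * (2 - a)\<^sup>2"
      using a_one_plus_less_iff[OF k a(1)] a by simp
    also have "\<dots> < k * (4 * x)\<^sup>2"
      using quarter_less a k by (intro mult_strict_left_mono power_strict_mono) auto
    finally show False
      using bound by simp
  qed
  then show ?thesis
    using a_one_plus_less_imp_roots[OF k a(1) _ branch] quarter_less discr_pos_iff[OF k a(1)]
      d_min_plus_less_iff[OF k _ _ x] less_d_max_plus_iff_branch[OF k branch] bound a
    by auto
qed

lemma region_imp_crit_condition:
  assumes k: "0 < k" and a: "a_star_plus k < a" "a < 1" and x: "0 < x"
    and lower: "d_min_plus a k < x\<^sup>2" and upper: "x\<^sup>2 < d_max_plus a k"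
  shows "4 * k * x\<^sup>2 < a\<^sup>2 \<and> (2 - a < 4 * x \<or> crit_quad a k x < 0)"
proof -
  have "0 < a"
    using a_star_plus_pos[OF k] a(1) by simp
  have discr: "0 < a\<^sup>2 + k * a - k"
    using discr_pos_iff[OF k \<open>0 < a\<close>] a(1) by simp
  then have lo: "root_lo a k < x"
    using d_min_plus_less_iff[OF k _ _ x] lower a(2) by simp
  note upper_iff = less_d_max_plus_iff_root_hi[OF k less_imp_le[OF discr] less_imp_le[OF a(2)] _ x]
  have "4 * k * x\<^sup>2 < a\<^sup>2"
  proof (cases "a_one_plus k < a")
    case True
    then show ?thesis
      using less_d_max_plus_iff_branch[OF k] upper by simp
  next
    case False
    then have "4 * k * x\<^sup>2 < 4 * k * (root_hi a k)\<^sup>2"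
      using upper_iff upper x k by (intro mult_strict_left_mono power_strict_mono) auto
    then show ?thesis
      using root_hi_sq_le[OF k] discr by (meson less_imp_le less_le_trans)
  qed
  moreover have "2 - a < 4 * x \<or> crit_quad a k x < 0"
  proof (cases "x < root_hi a k")
    case True
    then show ?thesis
      using crit_quad_neg_iff[OF k] discr lo by simp
  next
    case False
    then have "a_one_plus k < a"
      using upper_iff upper by auto
    then show ?thesis
      using a_one_plus_less_imp_roots[OF k \<open>0 < a\<close> less_imp_le[OF a(2)]] False by simp
  qed
  ultimately show ?thesis ..
qed

section \<open>The threshold d_diamond of the cubic\<close>

definition gcub_slope :: "real \<Rightarrow> real \<Rightarrow> real \<Rightarrow> real" where
  "gcub_slope A b v = (1 - A) * (A - b) + (1 + b - A) * v - v\<^sup>2"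

lemma gcub_diff_eq: "gcub A b - gcub v b = (A - v) * gcub_slope A b v"
  unfolding gcub_def gcub_slope_def by (simp add: power2_eq_square algebra_simps)

lemma reflect_nl_gcub: "reflect_nl gcub = gcub"
  by (intro ext) (simp add: reflect_nl_def gcub_def algebra_simps)

lemma d_diamond_gcub_condition_iff:
  assumes "0 < A"
  shows "(\<forall>v\<in>{0..A}. d * (K + 1) * (A - v) - gcub A b \<ge> - gcub v b)
     \<longleftrightarrow> (\<forall>v\<in>{0..A}. gcub_slope A b v \<le> d * (K + 1))"
proof -
  have pointwise: "d * (K + 1) * (A - v) - gcub A b \<ge> - gcub v b
      \<longleftrightarrow> (A - v) * gcub_slope A b v \<le> (A - v) * (d * (K + 1))" for v
  proof -
    have "gcub A b = gcub v b + (A - v) * gcub_slope A b v"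
      using gcub_diff_eq[of A b v] by simp
    then show ?thesis
      by (intro iffI) (simp_all add: algebra_simps)
  qed
  have "(\<forall>v\<in>{0..A}. d * (K + 1) * (A - v) - gcub A b \<ge> - gcub v b)
      \<longleftrightarrow> (\<forall>v\<in>{0..<A}. gcub_slope A b v \<le> d * (K + 1))"
    unfolding pointwise
  proof (intro iffI ballI)
    fix v
    assume "\<forall>v\<in>{0..A}. (A - v) * gcub_slope A b v \<le> (A - v) * (d * (K + 1))" "v \<in> {0..<A}"
    then show "gcub_slope A b v \<le> d * (K + 1)"
      using mult_le_cancel_left_pos[of "A - v"] by force
  next
    fix v
    assume "\<forall>v\<in>{0..<A}. gcub_slope A b v \<le> d * (K + 1)" "v \<in> {0..A}"
    then show "(A - v) * gcub_slope A b v \<le> (A - v) * (d * (K + 1))"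
      by (cases "v = A") (auto intro: mult_left_mono)
  qed
  also have "\<dots> \<longleftrightarrow> (\<forall>v\<in>{0..A}. gcub_slope A b v \<le> d * (K + 1))"
  proof
    assume "\<forall>v\<in>{0..<A}. gcub_slope A b v \<le> d * (K + 1)"
    moreover have "closed {v. gcub_slope A b v \<le> d * (K + 1)}"
      unfolding gcub_slope_def by (intro closed_Collect_le continuous_intros)
    ultimately have "closure {0..<A} \<subseteq> {v. gcub_slope A b v \<le> d * (K + 1)}"
      by (intro closure_minimal) auto
    then show "\<forall>v\<in>{0..A}. gcub_slope A b v \<le> d * (K + 1)"
      using assms by auto
  qed auto
  finally show ?thesis .
qed

lemma d_diamond_gcub_less_iff:
  assumes "b < A" "A < 1" "0 < A" "0 < K + 1"
  shows "d_diamond gcub K A b < D \<longleftrightarrow> (\<forall>v\<in>{0..A}. gcub_slope A b v < (K + 1) * D)"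
proof -
  have "continuous_on {0..A} (gcub_slope A b)"
    unfolding gcub_slope_def by (intro continuous_intros)
  then obtain vm where vm: "vm \<in> {0..A}" and max: "\<forall>v\<in>{0..A}. gcub_slope A b v \<le> gcub_slope A b vm"
    using continuous_attains_sup[of "{0..A}" "gcub_slope A b"] assms(3) by auto
  define M where "M = gcub_slope A b vm"
  have "0 < gcub_slope A b 0"
    unfolding gcub_slope_def using assms(1,2) by simp
  then have "0 < M"
    unfolding M_def using max assms(3) by (meson atLeastAtMost_iff less_le_trans order_refl less_imp_le)
  have "d > 0 \<and> (\<forall>v\<in>{0..A}. gcub_slope A b v \<le> d * (K + 1)) \<longleftrightarrow> M / (K + 1) \<le> d" for d
  proof
    assume "d > 0 \<and> (\<forall>v\<in>{0..A}. gcub_slope A b v \<le> d * (K + 1))"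
    then show "M / (K + 1) \<le> d"
      using vm assms(4) unfolding M_def by (simp add: pos_divide_le_eq)
  next
    assume "M / (K + 1) \<le> d"
    then have "M \<le> d * (K + 1)"
      using assms(4) by (simp add: pos_divide_le_eq)
    moreover have "d > 0"
      using \<open>0 < M\<close> \<open>M \<le> d * (K + 1)\<close> assms(4) by (meson less_le_trans zero_less_mult_pos2)
    ultimately show "d > 0 \<and> (\<forall>v\<in>{0..A}. gcub_slope A b v \<le> d * (K + 1))"
      using max unfolding M_def by (auto intro: order_trans)
  qed
  then have "{d. d > 0 \<and> (\<forall>v\<in>{0..A}. d * (K + 1) * (A - v) - gcub A b \<ge> - gcub v b)} = {M / (K + 1)..}"
    unfolding d_diamond_gcub_condition_iff[OF assms(3)] by auto
  then have "d_diamond gcub K A b = M / (K + 1)"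
    unfolding d_diamond_def by simp
  then show ?thesis
    using max vm assms(4) unfolding M_def
    by (auto simp: pos_divide_less_eq mult.commute intro: le_less_trans)
qed

lemma mem_D_plus_iff:
  assumes k: "0 < k"
  shows "(a, d) \<in> D_plus k \<longleftrightarrow> (a, d) \<in> H_strip \<and>
    (\<exists>w\<in>{0<..<a}. k * d < w * (a - w) \<and>
       (\<forall>v\<in>{0..1 - w}. w * (a - w) + (1 - a + w) * v - v\<^sup>2 < (1 + k) * d))"
proof (cases "(a, d) \<in> H_strip")
  case True
  then have a: "0 < a" "a < 1" and d: "0 < d"
    unfolding H_strip_def by auto
  have "(1 - a, d * k) \<in> H_strip"
    unfolding H_strip_def using a d k by simp
  moreover have "d_diamond gcub (1 / k) (1 - w) (1 - a) < d * k \<and> d * k < gcub (1 - w) (1 - a) / (1 - w)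
      \<longleftrightarrow> k * d < w * (a - w) \<and>
          (\<forall>v\<in>{0..1 - w}. w * (a - w) + (1 - a + w) * v - v\<^sup>2 < (1 + k) * d)"
    if w: "0 < w" "w < a" for w
  proof -
    have factor: "(1 / k + 1) * (d * k) = (1 + k) * d"
      using k by (simp add: field_simps)
    have slope: "gcub_slope (1 - w) (1 - a) v = w * (a - w) + (1 - a + w) * v - v\<^sup>2" for v
      unfolding gcub_slope_def by (simp add: algebra_simps)
    have "d_diamond gcub (1 / k) (1 - w) (1 - a) < d * k
        \<longleftrightarrow> (\<forall>v\<in>{0..1 - w}. gcub_slope (1 - w) (1 - a) v < (1 / k + 1) * (d * k))"
      using w a k by (intro d_diamond_gcub_less_iff) (auto simp: add_pos_pos)
    moreover have "gcub (1 - w) (1 - a) / (1 - w) = w * (a - w)"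
      unfolding gcub_def using w a by simp
    ultimately show ?thesis
      unfolding factor slope by (auto simp: mult.commute[of d k])
  qed
  moreover have "(\<exists>A\<in>{1 - a<..<1}. P A) \<longleftrightarrow> (\<exists>w\<in>{0<..<a}. P (1 - w))" for P
  proof
    assume "\<exists>A\<in>{1 - a<..<1}. P A"
    then obtain A where "A \<in> {1 - a<..<1}" "P A" by blast
    then show "\<exists>w\<in>{0<..<a}. P (1 - w)"
      by (intro bexI[of _ "1 - A"]) auto
  next
    assume "\<exists>w\<in>{0<..<a}. P (1 - w)"
    then obtain w where "w \<in> {0<..<a}" "P (1 - w)" by blast
    then show "\<exists>A\<in>{1 - a<..<1}. P A"
      by (intro bexI[of _ "1 - w"]) auto
  qed
  ultimately show ?thesis
    using True unfolding D_plus_def D_minus_def reflect_nl_gcub by auto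
next
  case False
  then show ?thesis
    unfolding D_plus_def by simp
qed

lemma crit_condition_necessary:
  fixes a k w x :: real
  assumes w: "w \<le> 1" and x: "0 < x"
    and above: "k * x\<^sup>2 < w * (a - w)"
    and below: "\<forall>v\<in>{0..1 - w}. w * (a - w) + (1 - a + w) * v - v\<^sup>2 < (1 + k) * x\<^sup>2"
  shows "4 * k * x\<^sup>2 < a\<^sup>2 \<and> (2 - a < 4 * x \<or> crit_quad a k x < 0)"
proof -
  have bound: "4 * k * x\<^sup>2 < a\<^sup>2"
    using four_mult_diff_le_sq[of w a] above by simp
  define z where "z = 2 * x - (1 - a)"
  have "min w (a - w) < z"
  proof (cases "x \<le> 1 - w")
    case True
    then have "w * (a - w) + (1 - a + w) * x - x\<^sup>2 < (1 + k) * x\<^sup>2"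
      using below x by simp
    then have "(1 - a + w) * x < 2 * x * x"
      using above by (simp add: power2_eq_square algebra_simps)
    then have "1 - a + w < 2 * x"
      using x by simp
    then show ?thesis
      unfolding z_def by simp
  next
    case False
    then show ?thesis
      unfolding z_def using w by simp
  qed
  then have "2 - a < 4 * x \<or> k * x\<^sup>2 < z * (a - z)"
    using mult_diff_less_mult_diff[of w a z] above unfolding z_def by fastforce
  then show ?thesis
    using bound crit_quad_shifted[of a k x] unfolding z_def by auto
qed

section \<open>Reduction of D^+ to the critical quadratic\<close>

lemma vertex_bound_right_of_root:
  fixes a c C w0 :: real
  assumes w0: "0 < w0" "w0 < a / 2" "w0 * (a - w0) = c"
    and vertex: "c + (1 - a + w0)\<^sup>2 / 4 < C"
  shows "\<exists>w\<in>{0<..<a}. c < w * (a - w) \<and> w * (a - w) + (1 - a + w)\<^sup>2 / 4 < C"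
proof -
  have "((\<lambda>w. w * (a - w) + (1 - a + w)\<^sup>2 / 4) \<longlongrightarrow> w0 * (a - w0) + (1 - a + w0)\<^sup>2 / 4)
      (at_right w0)"
    by (intro tendsto_intros) simp_all
  then have "eventually (\<lambda>w. w * (a - w) + (1 - a + w)\<^sup>2 / 4 < C) (at_right w0)"
    using w0(3) vertex by (simp add: order_tendsto_iff)
  moreover have "eventually (\<lambda>w. w \<in> {w0<..<a - w0}) (at_right w0)"
    using w0(2) by (intro eventually_at_right_real) simp
  ultimately obtain w where w: "w \<in> {w0<..<a - w0}"
      and vertex_w: "w * (a - w) + (1 - a + w)\<^sup>2 / 4 < C"
    using eventually_happens[OF eventually_conj] by fastforce
  have "w * (a - w) - w0 * (a - w0) = (w - w0) * (a - w - w0)"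
    by (simp add: algebra_simps)
  moreover have "0 < (w - w0) * (a - w - w0)"
    using w by simp
  moreover have "w \<in> {0<..<a}"
    using w w0(1) by simp
  ultimately show ?thesis
    using w0(3) vertex_w by force
qed

lemma crit_condition_sufficient:
  fixes a k x :: real
  assumes k: "0 < k" and a: "0 < a" "a < 1" and x: "0 < x"
    and bound: "4 * k * x\<^sup>2 < a\<^sup>2" and crit: "2 - a < 4 * x \<or> crit_quad a k x < 0"
  shows "\<exists>w\<in>{0<..<a}. k * x\<^sup>2 < w * (a - w) \<and> w * (a - w) + (1 - a + w)\<^sup>2 / 4 < (1 + k) * x\<^sup>2"
proof -
  define E where "E = sqrt (a\<^sup>2 - 4 * k * x\<^sup>2)"
  have E: "0 < E" "E\<^sup>2 = a\<^sup>2 - 4 * k * x\<^sup>2"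
    unfolding E_def using bound by auto
  define w0 where "w0 = (a - E) / 2"
  have w0: "w0 < a / 2" "w0 * (a - w0) = k * x\<^sup>2"
    unfolding w0_def using E by (simp_all add: power2_eq_square field_simps)
  have "E\<^sup>2 < a\<^sup>2"
    using E k x by simp
  then have "0 < w0"
    unfolding w0_def using a by (simp add: power2_less_imp_less)
  define z where "z = 2 * x - (1 - a)"
  have "w0 < z"
  proof (cases "2 - a < 4 * x")
    case True
    then show ?thesis
      using w0 unfolding z_def by simp
  next
    case False
    then have "k * x\<^sup>2 < z * (a - z)"
      using crit crit_quad_shifted[of a k x] unfolding z_def by simp
    moreover have "z * (a - z) \<le> w0 * (a - w0)" if "z \<le> w0"
      using mult_diff_less_mult_diff[of z a w0] w0(1) that by (cases "z = w0") auto
    ultimately show ?thesis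
      using w0(2) by force
  qed
  then have "(1 - a + w0)\<^sup>2 < (2 * x)\<^sup>2"
    using a \<open>0 < w0\<close> unfolding z_def by (intro power_strict_mono) auto
  then have "k * x\<^sup>2 + (1 - a + w0)\<^sup>2 / 4 < (1 + k) * x\<^sup>2"
    by (simp add: power_mult_distrib algebra_simps)
  then show ?thesis
    using vertex_bound_right_of_root[OF \<open>0 < w0\<close> w0] by blast
qed

lemma exists_w_iff_crit_condition:
  assumes k: "0 < k" and a: "0 < a" "a < 1" and x: "0 < x"
  shows "(\<exists>w\<in>{0<..<a}. k * x\<^sup>2 < w * (a - w) \<and>
            (\<forall>v\<in>{0..1 - w}. w * (a - w) + (1 - a + w) * v - v\<^sup>2 < (1 + k) * x\<^sup>2))
     \<longleftrightarrow> 4 * k * x\<^sup>2 < a\<^sup>2 \<and> (2 - a < 4 * x \<or> crit_quad a k x < 0)"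
proof
  assume "\<exists>w\<in>{0<..<a}. k * x\<^sup>2 < w * (a - w) \<and>
            (\<forall>v\<in>{0..1 - w}. w * (a - w) + (1 - a + w) * v - v\<^sup>2 < (1 + k) * x\<^sup>2)"
  then obtain w where "w \<in> {0<..<a}" "k * x\<^sup>2 < w * (a - w)"
      "\<forall>v\<in>{0..1 - w}. w * (a - w) + (1 - a + w) * v - v\<^sup>2 < (1 + k) * x\<^sup>2"
    by blast
  moreover from this(1) have "w \<le> 1"
    using a by simp
  ultimately show "4 * k * x\<^sup>2 < a\<^sup>2 \<and> (2 - a < 4 * x \<or> crit_quad a k x < 0)"
    using crit_condition_necessary[OF _ x] by blast
next
  assume "4 * k * x\<^sup>2 < a\<^sup>2 \<and> (2 - a < 4 * x \<or> crit_quad a k x < 0)"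
  then obtain w where w: "w \<in> {0<..<a}" "k * x\<^sup>2 < w * (a - w)"
      and vertex: "w * (a - w) + (1 - a + w)\<^sup>2 / 4 < (1 + k) * x\<^sup>2"
    using crit_condition_sufficient[OF k a x] by blast
  have "w * (a - w) + (1 - a + w) * v - v\<^sup>2 \<le> w * (a - w) + (1 - a + w)\<^sup>2 / 4" for v
    using zero_le_power2[of "v - (1 - a + w) / 2"] by (simp add: power2_eq_square field_simps)
  then show "\<exists>w\<in>{0<..<a}. k * x\<^sup>2 < w * (a - w) \<and>
            (\<forall>v\<in>{0..1 - w}. w * (a - w) + (1 - a + w) * v - v\<^sup>2 < (1 + k) * x\<^sup>2)"
    using w vertex by (meson le_less_trans)
qed

lemma D_plus_eq:
  assumes k: "0 < k"
  shows "D_plus k = {(a, d). (a, d) \<in> H_strip \<and> a > a_star_plus k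
                              \<and> d_min_plus a k < d \<and> d < d_max_plus a k}"
proof (intro set_eqI)
  fix p :: "real \<times> real"
  obtain a d where p: "p = (a, d)" by fastforce
  show "p \<in> D_plus k \<longleftrightarrow> p \<in> {(a, d). (a, d) \<in> H_strip \<and> a > a_star_plus k
                              \<and> d_min_plus a k < d \<and> d < d_max_plus a k}"
  proof (cases "(a, d) \<in> H_strip")
    case True
    then have a: "0 < a" "a < 1" and d: "0 < d"
      unfolding H_strip_def by auto
    define x where "x = sqrt d"
    have x: "0 < x" "x\<^sup>2 = d"
      unfolding x_def using d by auto
    show ?thesis
      using exists_w_iff_crit_condition[OF k a x(1)] True
        crit_condition_imp_region[OF k a x(1)] region_imp_crit_condition[OF k _ a(2) x(1)]
      unfolding p mem_D_plus_iff[OF k] x(2) by auto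
  next
    case False
    then show ?thesis
      unfolding p mem_D_plus_iff[OF k] by simp
  qed
qed

lemma d_plus_eq:
  assumes a: "0 < a" "a \<le> 1" and k: "0 < k"
  shows "d_plus a k = a\<^sup>2 / (4 * k)"
proof -
  let ?f = "\<lambda>y. - gcub (1 - y) a / (k * y)"
  have f: "?f y = (1 - y) * (y - (1 - a)) / k" if "0 < y" for y
    using that k by (simp add: gcub_def field_simps)
  show ?thesis
    unfolding d_plus_def
  proof (rule cSup_eq_maximum)
    have "a\<^sup>2 / (4 * k) = ?f (1 - a / 2)"
      using f[of "1 - a / 2"] a by (simp add: field_simps power2_eq_square)
    moreover have "1 - a / 2 \<in> {1 - a<..<1}"
      using a by simp
    ultimately show "a\<^sup>2 / (4 * k) \<in> ?f ` {1 - a<..<1}"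
      by (rule image_eqI)
  next
    fix z
    assume "z \<in> ?f ` {1 - a<..<1}"
    then obtain y where y: "y \<in> {1 - a<..<1}" and z: "z = ?f y"
      by auto
    have "(1 - y) * (y - (1 - a)) \<le> a\<^sup>2 / 4"
      using four_mult_diff_le_sq[of "y - (1 - a)" a] by (simp add: algebra_simps)
    then have "(1 - y) * (y - (1 - a)) / k \<le> a\<^sup>2 / 4 / k"
      using k by (intro divide_right_mono) auto
    moreover have "0 < y"
      using y a by auto
    ultimately show "z \<le> a\<^sup>2 / (4 * k)"
      using f z by simp
  qed
qed

lemma d_min_d_max_d_plus_ordered:
  assumes k: "0 < k" and a: "a_star_plus k \<le> a" "a \<le> 1"
  shows "0 \<le> d_min_plus a k \<and> d_min_plus a k \<le> d_max_plus a k \<and> d_max_plus a k \<le> d_plus a k"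
proof -
  have discr: "0 \<le> a\<^sup>2 + k * a - k"
    using discr_nonneg[OF k a(1)] .
  have "0 < a"
    using a_star_plus_pos[OF k] a by simp
  then have d_plus: "d_plus a k = a\<^sup>2 / (4 * k)"
    using d_plus_eq a(2) k by simp
  have "0 \<le> root_lo a k" "root_lo a k \<le> root_hi a k"
    using root_lo_nonneg[OF k discr a(2)] root_lo_le_root_hi[OF k discr] .
  then have lo_hi: "(root_lo a k)\<^sup>2 \<le> (root_hi a k)\<^sup>2"
    by (intro power_mono)
  have hi: "(root_hi a k)\<^sup>2 \<le> a\<^sup>2 / (4 * k)"
    using root_hi_sq_le[OF k discr] k by (simp add: le_divide_eq mult.commute)
  show ?thesis
    using d_min_plus_eq[OF discr] d_max_plus_eq_root_hi[OF discr] d_max_plus_eq_branch lo_hi hi d_plus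
    by (cases "a_one_plus k < a") auto
qed

lemma d_max_plus_a_star_plus:
  assumes k: "0 < k"
  shows "d_max_plus (a_star_plus k) k = d_min_plus (a_star_plus k) k"
proof -
  have "\<not> a_one_plus k < a_star_plus k"
    using a_one_plus_less_imp_roots(1)[OF k a_star_plus_pos[OF k] less_imp_le[OF a_star_plus_less_one[OF k]]]
      a_star_plus_root[OF k] by auto
  then show ?thesis
    unfolding d_max_plus_def d_min_plus_def using a_star_plus_root[OF k] by simp
qed

lemma d_min_plus_continuous:
  "continuous_on {(a, k'). 0 < k' \<and> a_star_plus k' \<le> a \<and> a \<le> 1} (\<lambda>(a, k'). d_min_plus a k')"
  unfolding d_min_plus_def case_prod_beta' by (intro continuous_intros) auto

lemma d_max_plus_continuous:
  "continuous_on {(a, k'). 0 < k' \<and> a_star_plus k' \<le> a \<and> a \<le> 1} (\<lambda>(a, k'). d_max_plus a k')"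
  unfolding case_prod_beta'
proof -
  let ?S = "{p :: real \<times> real. 0 < snd p \<and> a_star_plus (snd p) \<le> fst p \<and> fst p \<le> 1}"
  let ?switch = "\<lambda>p::real \<times> real. fst p - 2 * sqrt (snd p) / (2 + sqrt (snd p))"
  let ?root = "\<lambda>p::real \<times> real. (2 * (fst p)\<^sup>2 + fst p * (snd p - 4) + 4 - snd p
      + 2 * (2 - fst p) * sqrt ((fst p)\<^sup>2 + snd p * fst p - snd p)) / (4 + snd p)\<^sup>2"
  let ?branch = "\<lambda>p::real \<times> real. (fst p)\<^sup>2 / (4 * snd p)"
  have cont: "continuous_on ?S (\<lambda>p. if ?switch p \<le> 0 then ?root p else ?branch p)"
  proof (rule continuous_on_cases_le)
    show "continuous_on {p \<in> ?S. ?switch p \<le> 0} ?root"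
      by (intro continuous_intros) (auto simp: add_pos_pos)
    show "continuous_on {p \<in> ?S. 0 \<le> ?switch p} ?branch"
      by (intro continuous_intros) auto
    show "continuous_on ?S ?switch"
      by (intro continuous_intros) (auto dest: real_sqrt_gt_zero)
    show "?root p = ?branch p" if "p \<in> ?S" "?switch p = 0" for p
      using that d_max_plus_formulas_agree[of "snd p" "fst p"] by auto
  qed
  have formula: "(if ?switch p \<le> 0 then ?root p else ?branch p) = d_max_plus (fst p) (snd p)"
    if "p \<in> ?S" for p
    using that unfolding d_max_plus_def a_one_plus_def by auto
  show "continuous_on ?S (\<lambda>p. d_max_plus (fst p) (snd p))"
    by (rule continuous_on_eq[OF cont formula])
qed

theorem corollary2p10:
  fixes k :: real
  assumes "k > 0"
  shows "continuous_on {(a, k'). 0 < k' \<and> a_star_plus k' \<le> a \<and> a \<le> 1} (\<lambda>(a, k'). d_min_plus a k')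
       \<and> continuous_on {(a, k'). 0 < k' \<and> a_star_plus k' \<le> a \<and> a \<le> 1} (\<lambda>(a, k'). d_max_plus a k')
       \<and> (\<forall>a\<in>{a_star_plus k..1}. 0 \<le> d_min_plus a k \<and> d_min_plus a k \<le> d_max_plus a k
                                  \<and> d_max_plus a k \<le> d_plus a k)
       \<and> d_max_plus (a_star_plus k) k = d_min_plus (a_star_plus k) k
       \<and> D_plus k = {(a, d). (a, d) \<in> H_strip \<and> a > a_star_plus k
                              \<and> d_min_plus a k < d \<and> d < d_max_plus a k}"
  using d_min_plus_continuous d_max_plus_continuous d_min_d_max_d_plus_ordered[OF assms]
    d_max_plus_a_star_plus[OF assms] D_plus_eq[OF assms]
  by auto

end
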